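(* Let $d<\infty$, let $V\subset\mathbb{B}_d$ be an analytic disc attached to the unit sphere and $f$ its embedding map. Then for every $s<0$, $\mathcal{H}_s\neq\mathcal{H}_f$.
   Context: $\mathbb{D}$ is the open unit disc, $\mathbb{B}_d$ the open unit ball of $\mathbb{C}^d$. For $s\in\mathbb{R}$, $\mathcal{H}_s=\{h(z)=\sum_{n\ge0}a_nz^n:\ \sum_{n\ge0}(1+n)^{-s}|a_n|^2<\infty\}$. The Drury–Arveson space $H^2_d$ is the RKHS on $\mathbb{B}_d$ with kernel $1/(1-\langle z,w\rangle)$, with multiplier algebra $\mathcal{M}_d$. A variety is a common zero set in $\mathbb{B}_d$ of a family of functions from $\mathcal{M}_d$. An analytic disc attached to the unit sphere is a variety $V\subset\mathbb{B}_d$ ($d<\infty$) for which there is an injective analytic $f:\mathbb{D}\to\mathbb{B}_d$ with $f'(z)\neq0$ on $\mathbb{D}$, $V=f(\mathbb{D})$, $f$ extends to a $C^2$ map on $\overline{\mathbb{D}}$, and for $x\in\overline{\mathbb{D}}$, $\|f(x)\|=1$ iff $|x|=1$ ($f$ is the embedding map). $\mathcal{H}_f$ is the RKHS on $\mathbb{D}$ with kernel $k^f(z,w)=1/(1-\langle f(z),f(w)\rangle)$. Spaces are compared as sets of functions on $\mathbb{D}$. *)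

theory Defs
  imports "HOL-Analysis.Analysis"
begin

definition cinner :: "complex ^ 'd \<Rightarrow> complex ^ 'd \<Rightarrow> complex" where
  "cinner z w = (\<Sum>i\<in>UNIV. z $ i * cnj (w $ i))"

text \<open>A finite combination of kernel functions is represented by a list of
  (coefficient, point) pairs ps; it denotes the function z -> sum c * K z w.\<close>

definition kcomb :: "('a \<Rightarrow> 'a \<Rightarrow> complex) \<Rightarrow> (complex \<times> 'a) list \<Rightarrow> 'a \<Rightarrow> complex" where
  "kcomb K ps z = (\<Sum>(c, w)\<leftarrow>ps. c * K z w)"

text \<open>Squared norm: the norm of sum c_i k_{w_i} squared is
  sum_{i,j} c_i cnj(c_j) K(w_j, w_i).\<close>
definition knorm2 :: "('a \<Rightarrow> 'a \<Rightarrow> complex) \<Rightarrow> (complex \<times> 'a) list \<Rightarrow> real" where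
  "knorm2 K ps = Re (\<Sum>(c, w)\<leftarrow>ps. \<Sum>(c', w')\<leftarrow>ps. c * cnj c' * K w' w)"

definition kneg :: "(complex \<times> 'a) list \<Rightarrow> (complex \<times> 'a) list" where
  "kneg ps = map (\<lambda>(c, w). (- c, w)) ps"

text \<open>The RKHS H(K) on X: the completion of the span of the kernel functions,
  realised as pointwise limits on X of norm-Cauchy sequences in the span.\<close>
definition rkhs :: "('a \<Rightarrow> 'a \<Rightarrow> complex) \<Rightarrow> 'a set \<Rightarrow> ('a \<Rightarrow> complex) set" where
  "rkhs K X = {h. \<exists>ps :: nat \<Rightarrow> (complex \<times> 'a) list.
       (\<forall>n. snd ` set (ps n) \<subseteq> X) \<and>
       (\<forall>e>0. \<exists>N. \<forall>m\<ge>N. \<forall>n\<ge>N. knorm2 K (ps n @ kneg (ps m)) < e) \<and>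
       (\<forall>z\<in>X. (\<lambda>n. kcomb K (ps n) z) \<longlonglongrightarrow> h z)}"

definition Hs :: "real \<Rightarrow> (complex \<Rightarrow> complex) set" where
  "Hs s = {h. \<exists>a :: nat \<Rightarrow> complex.
       (\<forall>z\<in>ball 0 1. (\<lambda>n. a n * z ^ n) sums h z) \<and>
       summable (\<lambda>n. (1 + real n) powr (- s) * (cmod (a n))\<^sup>2)}"

definition DA_kernel :: "complex ^ 'd \<Rightarrow> complex ^ 'd \<Rightarrow> complex" where
  "DA_kernel z w = 1 / (1 - cinner z w)"

definition DA_space :: "(complex ^ 'd \<Rightarrow> complex) set" where
  "DA_space = rkhs DA_kernel (ball 0 1)"

definition DA_multipliers :: "(complex ^ 'd \<Rightarrow> complex) set" where
  "DA_multipliers = {\<phi>. \<forall>h\<in>DA_space. (\<lambda>z. \<phi> z * h z) \<in> DA_space}"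

definition DA_variety :: "(complex ^ 'd) set \<Rightarrow> bool" where
  "DA_variety V \<longleftrightarrow> (\<exists>S \<subseteq> DA_multipliers. V = {z \<in> ball 0 1. \<forall>\<phi>\<in>S. \<phi> z = 0})"

text \<open>C^2 in the real sense on an open set U (complex viewed as R^2).\<close>
definition C2_on :: "complex set \<Rightarrow> (complex \<Rightarrow> complex ^ 'd) \<Rightarrow> bool" where
  "C2_on U G \<longleftrightarrow> (\<exists>(G' :: complex \<Rightarrow> (complex \<Rightarrow>\<^sub>L (complex ^ 'd)))
                      (G'' :: complex \<Rightarrow> complex \<Rightarrow>\<^sub>L (complex \<Rightarrow>\<^sub>L (complex ^ 'd))).
      (\<forall>x\<in>U. (G has_derivative blinfun_apply (G' x)) (at x)) \<and>
      (\<forall>x\<in>U. (G' has_derivative blinfun_apply (G'' x)) (at x)) \<and>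
      continuous_on U G'')"

definition analytic_disc_attached ::
    "(complex ^ 'd) set \<Rightarrow> (complex \<Rightarrow> complex ^ 'd) \<Rightarrow> bool" where
  "analytic_disc_attached V f \<longleftrightarrow>
     DA_variety V \<and>
     inj_on f (ball 0 1) \<and>
     (\<forall>i. (\<lambda>z. f z $ i) holomorphic_on ball 0 1) \<and>
     (\<forall>z\<in>ball 0 1. \<exists>i. deriv (\<lambda>w. f w $ i) z \<noteq> 0) \<and>
     f ` ball 0 1 \<subseteq> ball 0 1 \<and>
     V = f ` ball 0 1 \<and>
     (\<exists>U F. open U \<and> cball 0 1 \<subseteq> U \<and> C2_on U F \<and>
        (\<forall>z\<in>ball 0 1. F z = f z) \<and>
        (\<forall>x\<in>cball 0 1. norm (F x) = 1 \<longleftrightarrow> cmod x = 1))"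

definition Hf :: "(complex \<Rightarrow> complex ^ 'd) \<Rightarrow> (complex \<Rightarrow> complex) set" where
  "Hf f = rkhs (\<lambda>z w. 1 / (1 - cinner (f z) (f w))) (ball 0 1)"

end

theory Submission
  imports Defs
begin

(*
  Suppose H_s = H_f. Since f extends C^1 to the closed disc with f(1) on the sphere,
  1 - |f(r)|^2 = O(1 - r) as r -> 1-, so the diagonal k^f(r,r) = 1/(1 - |f(r)|^2) of the
  kernel of H_f grows at least like 1/(1 - r). For s < 0 the kernel diagonal
  k_s(r,r) = sum (1+n)^s r^(2n) of H_s is o(1/(1 - r)), and Cauchy-Schwarz bounds
  |h(r)|^2 by a constant (depending on h) times k_s(r,r) for every h in H_s.
  Pick r_i -> 1 with k_s(r_i,r_i) <= 8^-i k^f(r_i,r_i). The series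
  h = sum_i 2^-i k^f(., r_i) / sqrt(k^f(r_i,r_i)) converges in H_f, and since
  Re k^f >= 0 all its terms add constructively at r_i, so |h(r_i)| >= 2^-i sqrt(k^f(r_i,r_i)).
  With M the constant for h this gives 4^-i k^f(r_i,r_i) <= M 8^-i k^f(r_i,r_i) for all i,
  which is absurd.
*)

section \<open>The Drury--Arveson kernel\<close>

lemma norm_cinner_le: "cmod (cinner a b) \<le> norm a * norm b"
proof -
  have "cmod (cinner a b) \<le> (\<Sum>i\<in>UNIV. cmod (a $ i * cnj (b $ i)))"
    unfolding cinner_def by (rule norm_sum)
  also have "\<dots> = (\<Sum>i\<in>UNIV. \<bar>cmod (a $ i)\<bar> * \<bar>cmod (b $ i)\<bar>)"
    by (simp add: norm_mult)
  also have "\<dots> \<le> L2_set (\<lambda>i. cmod (a $ i)) UNIV * L2_set (\<lambda>i. cmod (b $ i)) UNIV"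
    by (rule L2_set_mult_ineq)
  finally show ?thesis by (simp add: norm_vec_def)
qed

lemma cinner_self: "cinner a a = of_real ((norm a)\<^sup>2)"
proof -
  have "(norm a)\<^sup>2 = (\<Sum>i\<in>UNIV. (cmod (a $ i))\<^sup>2)"
    unfolding norm_vec_def L2_set_def by (simp add: sum_nonneg)
  moreover have "a $ i * cnj (a $ i) = of_real ((cmod (a $ i))\<^sup>2)" for i
    by (metis complex_norm_square)
  ultimately show ?thesis
    unfolding cinner_def by simp
qed

lemma DA_kernel_self: "DA_kernel a a = of_real (1 / (1 - (norm a)\<^sup>2))"
  unfolding DA_kernel_def cinner_self by simp

lemma norm_cinner_less_one:
  assumes "norm a < 1" "norm b < 1"
  shows "cmod (cinner a b) < 1"
proof -
  have "norm a * norm b < 1"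
    using assms mult_strict_mono[of "norm a" 1 "norm b" 1] by simp
  then show ?thesis using norm_cinner_le[of a b] by linarith
qed

lemma Re_DA_kernel_nonneg:
  assumes "norm a < 1" "norm b < 1"
  shows "0 \<le> Re (DA_kernel a b)"
proof -
  have "Re (cinner a b) < 1"
    using complex_Re_le_cmod[of "cinner a b"] norm_cinner_less_one[OF assms] by linarith
  then show ?thesis unfolding DA_kernel_def by (simp add: Re_divide)
qed

lemma norm_DA_kernel_le:
  assumes "norm a < 1" "norm b < 1"
  shows "cmod (DA_kernel a b) \<le> 1 / (1 - norm a * norm b)"
proof -
  have "1 - norm a * norm b \<le> 1 - cmod (cinner a b)"
    using norm_cinner_le[of a b] by simp
  also have "\<dots> \<le> cmod (1 - cinner a b)"
    by (metis norm_one norm_triangle_ineq2)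
  finally have "1 - norm a * norm b \<le> cmod (1 - cinner a b)" .
  moreover have "0 < 1 - norm a * norm b"
    using assms mult_strict_mono[of "norm a" 1 "norm b" 1] by simp
  ultimately show ?thesis
    unfolding DA_kernel_def by (simp add: norm_divide frac_le)
qed

lemma norm_DA_kernel_le_diag:
  assumes "norm a < 1" "norm b < 1"
  shows "cmod (DA_kernel a b) \<le> sqrt (1 / (1 - (norm a)\<^sup>2)) * sqrt (1 / (1 - (norm b)\<^sup>2))"
proof -
  let ?x = "norm a" and ?y = "norm b"
  have "0 < (1 - ?x\<^sup>2) * (1 - ?y\<^sup>2)"
    using assms by (simp add: abs_square_less_1)
  moreover have "(1 - ?x\<^sup>2) * (1 - ?y\<^sup>2) \<le> (1 - ?x * ?y)\<^sup>2"
    using zero_le_power2[of "?x - ?y"] by (simp add: algebra_simps power2_eq_square)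
  ultimately have "(1 / (1 - ?x * ?y))\<^sup>2 \<le> 1 / (1 - ?x\<^sup>2) * (1 / (1 - ?y\<^sup>2))"
    by (simp add: frac_le power_one_over)
  then have "1 / (1 - ?x * ?y) \<le> sqrt (1 / (1 - ?x\<^sup>2)) * sqrt (1 / (1 - ?y\<^sup>2))"
    by (metis real_le_rsqrt real_sqrt_mult)
  then show ?thesis using norm_DA_kernel_le[OF assms] by linarith
qed

section \<open>Series of kernel functions\<close>

(* The inner product of kcomb K L and kcomb K M in the RKHS of K (reproducing property). *)
definition kinner :: "('a \<Rightarrow> 'a \<Rightarrow> complex) \<Rightarrow> (complex \<times> 'a) list \<Rightarrow> (complex \<times> 'a) list \<Rightarrow> complex"
  where "kinner K L M = (\<Sum>(c, w)\<leftarrow>L. \<Sum>(c', w')\<leftarrow>M. c * cnj c' * K w' w)"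

lemma knorm2_eq_Re_kinner: "knorm2 K L = Re (kinner K L L)"
  unfolding knorm2_def kinner_def by simp

lemma kinner_append_left: "kinner K (L1 @ L2) M = kinner K L1 M + kinner K L2 M"
  unfolding kinner_def by simp

lemma kinner_append_right: "kinner K L (M1 @ M2) = kinner K L M1 + kinner K L M2"
  unfolding kinner_def by (induction L) (auto simp: algebra_simps)

lemma kinner_kneg_left: "kinner K (kneg L) M = - kinner K L M"
  unfolding kinner_def kneg_def by (induction L) (auto simp: uminus_sum_list_map o_def case_prod_unfold)

lemma kinner_kneg_right: "kinner K L (kneg M) = - kinner K L M"
  unfolding kinner_def kneg_def by (induction L) (auto simp: uminus_sum_list_map o_def case_prod_unfold)

lemma kneg_append: "kneg (L @ M) = kneg L @ kneg M"
  unfolding kneg_def by simp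

lemma knorm2_append_kneg_prefix:
  "knorm2 K (A @ T @ kneg A) = knorm2 K T"
  "knorm2 K (A @ kneg (A @ T)) = knorm2 K T"
  unfolding knorm2_eq_Re_kinner kneg_append
  by (simp_all add: kinner_append_left kinner_append_right kinner_kneg_left kinner_kneg_right)

lemma knorm2_map_upt_le:
  assumes p: "\<And>j. p j \<in> X"
    and K: "\<And>z w. z \<in> X \<Longrightarrow> w \<in> X \<Longrightarrow> cmod (K z w) \<le> B z * B w"
  shows "knorm2 K (map (\<lambda>j. (c j, p j)) [m..<n]) \<le> (\<Sum>j=m..<n. cmod (c j) * B (p j))\<^sup>2"
proof -
  have "knorm2 K (map (\<lambda>j. (c j, p j)) [m..<n])
      = Re (\<Sum>i=m..<n. \<Sum>j=m..<n. c i * cnj (c j) * K (p j) (p i))"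
    unfolding knorm2_def by (simp add: sum_set_upt_conv_sum_list_nat[symmetric] o_def)
  also have "\<dots> \<le> cmod (\<Sum>i=m..<n. \<Sum>j=m..<n. c i * cnj (c j) * K (p j) (p i))"
    by (rule complex_Re_le_cmod)
  also have "\<dots> \<le> (\<Sum>i=m..<n. \<Sum>j=m..<n. cmod (c i * cnj (c j) * K (p j) (p i)))"
    by (rule order_trans[OF norm_sum sum_mono[OF norm_sum]])
  also have "\<dots> \<le> (\<Sum>i=m..<n. \<Sum>j=m..<n. (cmod (c i) * B (p i)) * (cmod (c j) * B (p j)))"
  proof (intro sum_mono)
    fix i j
    have "cmod (K (p j) (p i)) \<le> B (p i) * B (p j)"
      using K[OF p[of j] p[of i]] by (simp add: mult.commute)
    then have "cmod (c i) * cmod (c j) * cmod (K (p j) (p i)) \<le> cmod (c i) * cmod (c j) * (B (p i) * B (p j))"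
      by (simp add: mult_left_mono)
    then show "cmod (c i * cnj (c j) * K (p j) (p i)) \<le> (cmod (c i) * B (p i)) * (cmod (c j) * B (p j))"
      by (simp add: norm_mult algebra_simps)
  qed
  also have "\<dots> = (\<Sum>j=m..<n. cmod (c j) * B (p j))\<^sup>2"
    by (simp add: power2_eq_square sum_product)
  finally show ?thesis .
qed

lemma kernel_series_summable:
  assumes p: "\<And>j. p j \<in> X" and z: "z \<in> X"
    and K: "\<And>z w. z \<in> X \<Longrightarrow> w \<in> X \<Longrightarrow> cmod (K z w) \<le> B z * B w"
    and c: "summable (\<lambda>j. cmod (c j) * B (p j))"
  shows "summable (\<lambda>j. c j * K z (p j))"
proof (rule summable_comparison_test)
  show "summable (\<lambda>j. B z * (cmod (c j) * B (p j)))"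
    using c by (rule summable_mult)
  have "cmod (c j) * cmod (K z (p j)) \<le> cmod (c j) * (B z * B (p j))" for j
    using K[OF z p] by (simp add: mult_left_mono)
  then show "\<exists>N. \<forall>j\<ge>N. norm (c j * K z (p j)) \<le> B z * (cmod (c j) * B (p j))"
    by (simp add: norm_mult algebra_simps)
qed

lemma kernel_series_in_rkhs:
  assumes p: "\<And>j. p j \<in> X"
    and K: "\<And>z w. z \<in> X \<Longrightarrow> w \<in> X \<Longrightarrow> cmod (K z w) \<le> B z * B w"
    and c: "summable (\<lambda>j. cmod (c j) * B (p j))"
  shows "(\<lambda>z. \<Sum>j. c j * K z (p j)) \<in> rkhs K X"
proof -
  define seg where "seg m n = map (\<lambda>j. (c j, p j)) [m..<n]" for m n
  define ps where "ps n = seg 0 n" for n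
  have ps_append: "ps n = ps m @ seg m n" if "m \<le> n" for m n
    using that upt_add_eq_append[of 0 m "n - m"] unfolding ps_def seg_def by simp
  have seg_small: "\<exists>N. \<forall>m\<ge>N. \<forall>n. knorm2 K (seg m n) < e" if e: "e > 0" for e
  proof -
    obtain N where N: "\<forall>m\<ge>N. \<forall>n. norm (\<Sum>j=m..<n. cmod (c j) * B (p j)) < sqrt e"
      using c e unfolding summable_Cauchy by (meson real_sqrt_gt_zero)
    have "knorm2 K (seg m n) < e" if "m \<ge> N" for m n
    proof -
      have "(\<Sum>j=m..<n. cmod (c j) * B (p j))\<^sup>2 < e"
        using N that by (metis real_norm_def real_sqrt_abs real_sqrt_less_iff)
      then show ?thesis
        using knorm2_map_upt_le[OF p K] unfolding seg_def by (meson le_less_trans)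
    qed
    then show ?thesis by blast
  qed
  have "\<exists>N. \<forall>m\<ge>N. \<forall>n\<ge>N. knorm2 K (ps n @ kneg (ps m)) < e" if e: "e > 0" for e
  proof -
    obtain N where N: "\<And>m n. m \<ge> N \<Longrightarrow> knorm2 K (seg m n) < e"
      using seg_small[OF e] by blast
    have "knorm2 K (ps n @ kneg (ps m)) < e" if "m \<ge> N" "n \<ge> N" for m n
    proof (cases "m \<le> n")
      case True
      then show ?thesis
        using N[OF \<open>m \<ge> N\<close>] by (simp add: ps_append knorm2_append_kneg_prefix)
    next
      case False
      then show ?thesis
        using N[OF \<open>n \<ge> N\<close>] by (simp add: ps_append[of n m] knorm2_append_kneg_prefix)
    qed
    then show ?thesis by blast
  qed
  moreover have "(\<lambda>n. kcomb K (ps n) z) \<longlonglongrightarrow> (\<Sum>j. c j * K z (p j))" if "z \<in> X" for z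
  proof -
    have "kcomb K (ps n) z = (\<Sum>j<n. c j * K z (p j))" for n
      unfolding kcomb_def ps_def seg_def
      by (simp add: sum_set_upt_conv_sum_list_nat[symmetric] o_def atLeast0LessThan)
    then show ?thesis
      using summable_LIMSEQ[OF kernel_series_summable[OF p that K c]] by simp
  qed
  moreover have "snd ` set (ps n) \<subseteq> X" for n
    using p unfolding ps_def seg_def by auto
  ultimately show ?thesis
    unfolding rkhs_def by blast
qed

lemma kernel_series_Re_ge_term:
  fixes c :: "nat \<Rightarrow> real"
  assumes p: "\<And>j. p j \<in> X" and z: "z \<in> X"
    and K: "\<And>z w. z \<in> X \<Longrightarrow> w \<in> X \<Longrightarrow> cmod (K z w) \<le> B z * B w"
    and Re_K: "\<And>z w. z \<in> X \<Longrightarrow> w \<in> X \<Longrightarrow> 0 \<le> Re (K z w)"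
    and c_nonneg: "\<And>j. 0 \<le> c j" and c: "summable (\<lambda>j. c j * B (p j))"
  shows "c i * Re (K z (p i)) \<le> Re (\<Sum>j. of_real (c j) * K z (p j))"
proof -
  have "summable (\<lambda>j. cmod (of_real (c j) :: complex) * B (p j))"
    using c c_nonneg by simp
  with p z K have "summable (\<lambda>j. of_real (c j) * K z (p j))"
    by (rule kernel_series_summable)
  moreover have "0 \<le> Re (of_real (c j) * K z (p j))" for j
    using c_nonneg Re_K[OF z p] by simp
  ultimately show ?thesis
    using sum_le_suminf[OF summable_Re, of "\<lambda>j. of_real (c j) * K z (p j)" "{i}"]
    by (simp add: Re_suminf)
qed

lemma rkhs_function_large_at_points:
  fixes K :: "'a \<Rightarrow> 'a \<Rightarrow> complex" and D :: "'a \<Rightarrow> real"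
  assumes K_diag: "\<And>z. z \<in> X \<Longrightarrow> K z z = of_real (D z)"
    and D_pos: "\<And>z. z \<in> X \<Longrightarrow> 0 < D z"
    and K_le_diag: "\<And>z w. z \<in> X \<Longrightarrow> w \<in> X \<Longrightarrow> cmod (K z w) \<le> sqrt (D z) * sqrt (D w)"
    and Re_K: "\<And>z w. z \<in> X \<Longrightarrow> w \<in> X \<Longrightarrow> 0 \<le> Re (K z w)"
    and p: "\<And>i. p i \<in> X"
  shows "\<exists>h\<in>rkhs K X. \<forall>i. (1/2)^i * sqrt (D (p i)) \<le> cmod (h (p i))"
proof -
  \<comment> \<open>Normalised kernel functions at the p j with weights 2^-j; since Re K >= 0,
    the j = i term alone bounds Re h (p i) from below.\<close>
  define c where "c j = (1/2)^j / sqrt (D (p j))" for j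
  have c_nonneg: "0 \<le> c j" for j
    unfolding c_def using D_pos[OF p, of j] by simp
  have c_sqrt_D: "c j * sqrt (D (p j)) = (1/2)^j" for j
    unfolding c_def using D_pos[OF p, of j] by simp
  then have c_summable: "summable (\<lambda>j. c j * sqrt (D (p j)))"
    by simp
  define h where "h z = (\<Sum>j. of_real (c j) * K z (p j))" for z
  have "h \<in> rkhs K X"
    unfolding h_def using c_summable c_nonneg
    by (intro kernel_series_in_rkhs[where B = "\<lambda>z. sqrt (D z)"]) (simp_all add: p K_le_diag)
  moreover have "(1/2)^i * sqrt (D (p i)) \<le> cmod (h (p i))" for i
  proof -
    have "(1/2)^i * sqrt (D (p i)) = c i * Re (K (p i) (p i))"
      using D_pos[OF p, of i] K_diag[OF p] by (simp flip: c_sqrt_D add: mult.assoc)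
    also have "\<dots> \<le> Re (h (p i))"
      unfolding h_def using c_nonneg c_summable
      by (intro kernel_series_Re_ge_term[where X = X and B = "\<lambda>z. sqrt (D z)"]) (simp_all add: p K_le_diag Re_K)
    also have "\<dots> \<le> cmod (h (p i))"
      by (rule complex_Re_le_cmod)
    finally show ?thesis .
  qed
  ultimately show ?thesis
    by blast
qed

lemma rkhs_not_subset_of_smaller_growth:
  fixes K :: "'a \<Rightarrow> 'a \<Rightarrow> complex" and D E :: "'a \<Rightarrow> real"
  assumes K_diag: "\<And>z. z \<in> X \<Longrightarrow> K z z = of_real (D z)"
    and D_pos: "\<And>z. z \<in> X \<Longrightarrow> 0 < D z"
    and K_le_diag: "\<And>z w. z \<in> X \<Longrightarrow> w \<in> X \<Longrightarrow> cmod (K z w) \<le> sqrt (D z) * sqrt (D w)"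
    and Re_K: "\<And>z w. z \<in> X \<Longrightarrow> w \<in> X \<Longrightarrow> 0 \<le> Re (K z w)"
    and H_growth: "\<And>h. h \<in> H \<Longrightarrow> \<exists>M\<ge>0. \<forall>z\<in>X. (cmod (h z))\<^sup>2 \<le> M * E z"
    and E_small: "\<And>\<epsilon>. \<epsilon> > 0 \<Longrightarrow> \<exists>z\<in>X. E z \<le> \<epsilon> * D z"
  shows "\<not> rkhs K X \<subseteq> H"
proof
  assume "rkhs K X \<subseteq> H"
  have "\<forall>i. \<exists>z\<in>X. E z \<le> (1/8)^i * D z"
    using E_small by simp
  then obtain p where p: "\<And>i. p i \<in> X" and E_p: "\<And>i. E (p i) \<le> (1/8)^i * D (p i)"
    by metis
  obtain h where "h \<in> rkhs K X" and h_large: "\<And>i. (1/2)^i * sqrt (D (p i)) \<le> cmod (h (p i))"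
    using rkhs_function_large_at_points[where X = X and K = K and D = D and p = p, OF K_diag D_pos K_le_diag Re_K p] by blast
  then obtain M where "M \<ge> 0" and M: "\<And>z. z \<in> X \<Longrightarrow> (cmod (h z))\<^sup>2 \<le> M * E z"
    using \<open>rkhs K X \<subseteq> H\<close> H_growth by blast
  have "2^i \<le> M" for i
  proof -
    have D_i: "0 < D (p i)"
      using D_pos[OF p] .
    have "((1/2)^i * sqrt (D (p i)))\<^sup>2 \<le> (cmod (h (p i)))\<^sup>2"
      using h_large D_i by (intro power_mono) auto
    also have "\<dots> \<le> M * ((1/8)^i * D (p i))"
      using M[OF p] mult_left_mono[OF E_p \<open>M \<ge> 0\<close>] by (rule order_trans)
    finally have "((1/2)^i * sqrt (D (p i)))\<^sup>2 \<le> M * ((1/8)^i * D (p i))" .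
    moreover have "((1/2::real)^i)\<^sup>2 = (1/4)^i" and "(1/4::real)^i = 2^i * (1/8)^i"
      by (simp_all add: power2_eq_square flip: power_mult_distrib)
    ultimately show ?thesis
      using D_i by (simp add: power_mult_distrib)
  qed
  moreover obtain i where "M < 2^i"
    using real_arch_pow[of 2 M] by auto
  ultimately show False
    using not_le by blast
qed

section \<open>Growth of functions in H_s\<close>

lemma norm_power_series_squared_le:
  fixes a :: "nat \<Rightarrow> complex" and w :: "nat \<Rightarrow> real"
  assumes sums: "(\<lambda>n. a n * z ^ n) sums S"
    and w_pos: "\<And>n. 0 < w n"
    and summable_a: "summable (\<lambda>n. w n * (cmod (a n))\<^sup>2)"
    and summable_z: "summable (\<lambda>n. ((cmod z)\<^sup>2) ^ n / w n)"
  shows "(cmod S)\<^sup>2 \<le> (\<Sum>n. w n * (cmod (a n))\<^sup>2) * (\<Sum>n. ((cmod z)\<^sup>2) ^ n / w n)"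
proof (rule LIMSEQ_le_const2)
  show "(\<lambda>N. (cmod (\<Sum>n<N. a n * z ^ n))\<^sup>2) \<longlonglongrightarrow> (cmod S)\<^sup>2"
    using sums unfolding sums_def by (intro tendsto_intros)
  have "(cmod (\<Sum>n<N. a n * z ^ n))\<^sup>2
      \<le> (\<Sum>n. w n * (cmod (a n))\<^sup>2) * (\<Sum>n. ((cmod z)\<^sup>2) ^ n / w n)" for N
  proof -
    have "sqrt (w n) * cmod (a n) * (cmod z ^ n / sqrt (w n)) = cmod (a n * z ^ n)" for n
      using w_pos[of n] by (simp add: norm_mult norm_power)
    then have "cmod (\<Sum>n<N. a n * z ^ n) \<le> (\<Sum>n<N. sqrt (w n) * cmod (a n) * (cmod z ^ n / sqrt (w n)))"
      by (simp add: norm_sum)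
    then have "(cmod (\<Sum>n<N. a n * z ^ n))\<^sup>2
        \<le> (\<Sum>n<N. sqrt (w n) * cmod (a n) * (cmod z ^ n / sqrt (w n)))\<^sup>2"
      by (intro power_mono) auto
    also have "\<dots> \<le> (\<Sum>n<N. (sqrt (w n) * cmod (a n))\<^sup>2) * (\<Sum>n<N. (cmod z ^ n / sqrt (w n))\<^sup>2)"
      by (rule Cauchy_Schwarz_ineq_sum)
    also have "\<dots> = (\<Sum>n<N. w n * (cmod (a n))\<^sup>2) * (\<Sum>n<N. ((cmod z)\<^sup>2) ^ n / w n)"
      using w_pos by (simp add: power_mult_distrib power_divide less_imp_le mult.commute flip: power_mult)
    also have "\<dots> \<le> (\<Sum>n. w n * (cmod (a n))\<^sup>2) * (\<Sum>n. ((cmod z)\<^sup>2) ^ n / w n)"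
      using w_pos summable_a summable_z
      by (intro mult_mono sum_le_suminf sum_nonneg suminf_nonneg) (auto simp: less_imp_le)
    finally show ?thesis .
  qed
  then show "\<exists>N. \<forall>n\<ge>N. (cmod (\<Sum>n<n. a n * z ^ n))\<^sup>2
      \<le> (\<Sum>n. w n * (cmod (a n))\<^sup>2) * (\<Sum>n. ((cmod z)\<^sup>2) ^ n / w n)"
    by blast
qed

lemma tendsto_one_minus_mult_power_series_null:
  fixes w :: "nat \<Rightarrow> real"
  assumes "w \<longlonglongrightarrow> 0"
  shows "((\<lambda>t. (1 - t) * (\<Sum>n. w n * t ^ n)) \<longlongrightarrow> 0) (at_left 1)"
proof (rule tendstoI)
  fix e :: real
  assume e: "e > 0"
  then obtain N where N: "\<And>n. n \<ge> N \<Longrightarrow> \<bar>w n\<bar> < e/2"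
    using tendstoD[OF assms, of "e/2"] by (auto simp: eventually_sequentially)
  define C where "C = (\<Sum>n<N. \<bar>w n\<bar>)"
  have "C \<ge> 0"
    unfolding C_def by simp
  have bound: "\<bar>(1 - t) * (\<Sum>n. w n * t ^ n)\<bar> < e" if t: "t \<in> {max 0 (1 - e / (2 * (C + 1)))<..<1}" for t
  proof -
    from t have "t < 1" by simp
    define b where "b n = (if n \<in> {..<N} then \<bar>w n\<bar> else 0) + e/2 * t ^ n" for n
    have "b sums (C + e/2 * (1 / (1 - t)))"
      unfolding b_def C_def using t
      by (intro sums_add sums_If_finite_set sums_mult geometric_sums) auto
    moreover have "norm (w n * t ^ n) \<le> b n" for n
    proof -
      have "norm (w n * t ^ n) = \<bar>w n\<bar> * t ^ n" and "0 \<le> e/2 * t ^ n"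
        using t e by (simp_all add: abs_mult)
      moreover have "\<bar>w n\<bar> * t ^ n \<le> \<bar>w n\<bar>"
        using t by (simp add: mult_left_le power_le_one)
      moreover have "n \<ge> N \<Longrightarrow> \<bar>w n\<bar> * t ^ n \<le> e/2 * t ^ n"
        using t N[of n] by (intro mult_right_mono) auto
      ultimately show ?thesis
        unfolding b_def by (cases "n < N") auto
    qed
    ultimately have S: "\<bar>\<Sum>n. w n * t ^ n\<bar> \<le> C + e/2 * (1 / (1 - t))"
      using norm_suminf_le[of "\<lambda>n. w n * t ^ n" b] by (simp add: sums_iff)
    have "(1 - t) * C \<le> e / (2 * (C + 1)) * C"
      using t \<open>C \<ge> 0\<close> by (intro mult_right_mono) auto
    also have "\<dots> < e/2"
      using e \<open>C \<ge> 0\<close> by (simp add: field_simps)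
    finally have C_small: "(1 - t) * C < e/2" .
    have "\<bar>(1 - t) * (\<Sum>n. w n * t ^ n)\<bar> = (1 - t) * \<bar>\<Sum>n. w n * t ^ n\<bar>"
      using \<open>t < 1\<close> by (simp add: abs_mult)
    also have "\<dots> \<le> (1 - t) * (C + e/2 * (1 / (1 - t)))"
      using \<open>t < 1\<close> S by (intro mult_left_mono) auto
    also have "\<dots> = (1 - t) * C + e/2"
      using \<open>t < 1\<close> by (simp add: divide_simps) algebra
    also have "\<dots> < e"
      using C_small by simp
    finally show ?thesis .
  qed
  have "max 0 (1 - e / (2 * (C + 1))) < 1"
    using e \<open>C \<ge> 0\<close> by simp
  from eventually_at_left_real[OF this]
  show "eventually (\<lambda>t. dist ((1 - t) * (\<Sum>n. w n * t ^ n)) 0 < e) (at_left 1)"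
    by (rule eventually_mono) (simp add: bound)
qed

(* The reproducing kernel of H_s on the diagonal, as a function of t = |z|^2. *)
definition Hs_kernel_diag :: "real \<Rightarrow> real \<Rightarrow> real" where
  "Hs_kernel_diag s t = (\<Sum>n. (1 + real n) powr s * t ^ n)"

lemma summable_Hs_kernel_diag:
  assumes "s \<le> 0" "0 \<le> t" "t < 1"
  shows "summable (\<lambda>n. (1 + real n) powr s * t ^ n)"
proof (rule summable_comparison_test)
  show "summable (\<lambda>n. t ^ n)"
    using assms by simp
  have "(1 + real n) powr s \<le> (1 + real n) powr 0" for n
    using assms by (intro powr_mono) auto
  then show "\<exists>N. \<forall>n\<ge>N. norm ((1 + real n) powr s * t ^ n) \<le> t ^ n"
    using assms by (simp add: mult_left_le_one_le)
qed

lemma Hs_growth: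
  assumes "h \<in> Hs s" "s \<le> 0"
  shows "\<exists>M\<ge>0. \<forall>z\<in>ball 0 1. (cmod (h z))\<^sup>2 \<le> M * Hs_kernel_diag s ((cmod z)\<^sup>2)"
proof -
  obtain a where sums: "\<And>z. z \<in> ball 0 1 \<Longrightarrow> (\<lambda>n. a n * z ^ n) sums h z"
    and summable_a: "summable (\<lambda>n. (1 + real n) powr (- s) * (cmod (a n))\<^sup>2)"
    using assms(1) unfolding Hs_def by blast
  define M where "M = (\<Sum>n. (1 + real n) powr (- s) * (cmod (a n))\<^sup>2)"
  have "(cmod (h z))\<^sup>2 \<le> M * Hs_kernel_diag s ((cmod z)\<^sup>2)" if z: "z \<in> ball 0 1" for z
  proof -
    have "((cmod z)\<^sup>2) ^ n / (1 + real n) powr (- s) = (1 + real n) powr s * ((cmod z)\<^sup>2) ^ n" for n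
      by (simp add: powr_minus_divide)
    moreover have "summable (\<lambda>n. (1 + real n) powr s * ((cmod z)\<^sup>2) ^ n)"
      using z assms(2) by (intro summable_Hs_kernel_diag) (auto simp: abs_square_less_1)
    ultimately show ?thesis
      using norm_power_series_squared_le[OF sums[OF z], of "\<lambda>n. (1 + real n) powr (- s)"] summable_a
      unfolding M_def Hs_kernel_diag_def by simp
  qed
  moreover have "M \<ge> 0"
    unfolding M_def using summable_a by (intro suminf_nonneg) auto
  ultimately show ?thesis
    by blast
qed

lemma tendsto_Hs_kernel_diag:
  assumes "s < 0"
  shows "((\<lambda>t. (1 - t) * Hs_kernel_diag s t) \<longlongrightarrow> 0) (at_left 1)"
proof -
  have "filterlim (\<lambda>n. 1 + real n) at_top sequentially"
    by (rule filterlim_tendsto_add_at_top[OF tendsto_const filterlim_real_sequentially])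
  then have "(\<lambda>n. (1 + real n) powr s) \<longlonglongrightarrow> 0"
    using assms by (rule tendsto_neg_powr[rotated])
  then show ?thesis
    unfolding Hs_kernel_diag_def by (rule tendsto_one_minus_mult_power_series_null)
qed

section \<open>Boundary behaviour of an attached disc\<close>

lemma has_derivative_imp_bounded_difference:
  assumes "(F has_derivative F') (at x)"
  obtains L where "L > 0" "eventually (\<lambda>y. norm (F y - F x) \<le> L * norm (y - x)) (at x)"
proof -
  obtain K where K: "K > 0" "\<And>h. norm (F' h) \<le> norm h * K"
    using bounded_linear.pos_bounded[OF has_derivative_bounded_linear[OF assms]] by blast
  obtain d where "d > 0" and d: "\<And>y. norm (y - x) < d \<Longrightarrow> norm (F y - F x - F' (y - x)) \<le> norm (y - x)"
    using assms unfolding has_derivative_at_alt by (metis mult_1 zero_less_one)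
  have "norm (F y - F x) \<le> (1 + K) * norm (y - x)" if "dist y x < d" for y
  proof -
    have "norm (F y - F x) \<le> norm (F y - F x - F' (y - x)) + norm (F' (y - x))"
      using norm_triangle_ineq[of "F y - F x - F' (y - x)" "F' (y - x)"] by simp
    also have "\<dots> \<le> norm (y - x) + norm (y - x) * K"
      using d[of y] K(2)[of "y - x"] that by (simp add: dist_norm)
    finally show ?thesis
      by (simp add: algebra_simps)
  qed
  then have "eventually (\<lambda>y. norm (F y - F x) \<le> (1 + K) * norm (y - x)) (at x)"
    unfolding eventually_at using \<open>d > 0\<close> by blast
  then show thesis
    using K(1) that[of "1 + K"] by simp
qed

lemma analytic_disc_norm_less_one:
  assumes "analytic_disc_attached V f" "z \<in> ball 0 1"
  shows "norm (f z) < 1"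
proof -
  have "f ` ball 0 1 \<subseteq> ball 0 1"
    using assms(1) unfolding analytic_disc_attached_def by blast
  then have "f z \<in> ball 0 1"
    using assms(2) by blast
  then show ?thesis
    by simp
qed

lemma analytic_disc_boundary_rate:
  assumes "analytic_disc_attached V f"
  obtains L where "L > 0" "eventually (\<lambda>r. 1 - (norm (f (of_real r)))\<^sup>2 \<le> L * (1 - r)) (at_left 1)"
proof -
  obtain U F where U: "cball 0 1 \<subseteq> U" "C2_on U F" and F_f: "\<forall>z\<in>ball 0 1. F z = f z"
    and F_sphere: "\<forall>x\<in>cball 0 1. norm (F x) = 1 \<longleftrightarrow> cmod x = 1"
    using assms unfolding analytic_disc_attached_def by blast
  obtain F' where "\<forall>x\<in>U. (F has_derivative blinfun_apply (F' x)) (at x)"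
    using U(2) unfolding C2_on_def by blast
  moreover have "(1::complex) \<in> U"
    using U(1) by (rule subsetD) simp
  ultimately have "(F has_derivative F' 1) (at 1)"
    by blast
  then obtain L where "L > 0" and "eventually (\<lambda>y. norm (F y - F 1) \<le> L * norm (y - 1)) (at 1)"
    by (rule has_derivative_imp_bounded_difference)
  then obtain d where "d > 0" and d: "\<And>y. y \<noteq> 1 \<Longrightarrow> dist y 1 < d \<Longrightarrow> norm (F y - F 1) \<le> L * norm (y - 1)"
    unfolding eventually_at by auto
  have F_one: "norm (F 1) = 1"
    using F_sphere by simp
  have bound: "1 - (norm (f (of_real r)))\<^sup>2 \<le> 2 * L * (1 - r)" if r: "r \<in> {max 0 (1 - d)<..<1}" for r
  proof -
    have in_ball: "of_real r \<in> ball (0::complex) 1"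
      using r by auto
    have fr: "f (of_real r) = F (of_real r)"
      using F_f in_ball by simp
    have "1 - norm (f (of_real r)) \<le> norm (F (of_real r) - F 1)"
      using F_one fr norm_triangle_ineq3[of "F 1" "F (of_real r)"]
      by (simp add: norm_minus_commute)
    also have "\<dots> \<le> L * (1 - r)"
    proof -
      have "cmod (1 - of_real r) = 1 - r"
        using r by (metis of_real_1 of_real_diff norm_of_real abs_of_pos diff_gt_0_iff_gt greaterThanLessThan_iff)
      then show ?thesis
        using d[of "of_real r"] r by (simp add: dist_norm norm_minus_commute)
    qed
    finally have "1 - norm (f (of_real r)) \<le> L * (1 - r)" .
    moreover have "1 - (norm (f (of_real r)))\<^sup>2 \<le> 2 * (1 - norm (f (of_real r)))"
      using zero_le_power2[of "1 - norm (f (of_real r))"] by (simp add: power2_eq_square algebra_simps)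
    ultimately show ?thesis
      by simp
  qed
  have "max 0 (1 - d) < 1"
    using \<open>d > 0\<close> by simp
  from eventually_at_left_real[OF this]
  have "eventually (\<lambda>r. 1 - (norm (f (of_real r)))\<^sup>2 \<le> 2 * L * (1 - r)) (at_left 1)"
    by (rule eventually_mono) (rule bound)
  then show thesis
    using \<open>L > 0\<close> that[of "2 * L"] by simp
qed

lemma filterlim_power2_at_left_one: "filterlim (\<lambda>r. r\<^sup>2) (at_left 1) (at_left (1::real))"
  unfolding filterlim_at
proof
  have "eventually (\<lambda>r. r \<in> {0<..<1}) (at_left (1::real))"
    by (rule eventually_at_left_real) simp
  then show "eventually (\<lambda>r. r\<^sup>2 \<in> {..<1} \<and> r\<^sup>2 \<noteq> 1) (at_left (1::real))"
    by (rule eventually_mono) (auto simp: abs_square_less_1 power2_eq_1_iff)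
  show "((\<lambda>r. r\<^sup>2) \<longlongrightarrow> 1) (at_left (1::real))"
    by (auto intro!: tendsto_eq_intros)
qed

lemma Hs_kernel_diag_small_on_attached_disc:
  assumes "analytic_disc_attached V f" "s < 0" "\<epsilon> > 0"
  shows "\<exists>z\<in>ball 0 1. Hs_kernel_diag s ((cmod z)\<^sup>2) \<le> \<epsilon> * (1 / (1 - (norm (f z))\<^sup>2))"
proof -
  obtain L where "L > 0"
    and rate: "eventually (\<lambda>r. 1 - (norm (f (of_real r)))\<^sup>2 \<le> L * (1 - r)) (at_left 1)"
    using analytic_disc_boundary_rate[OF assms(1)] by blast
  have unit_interval: "eventually (\<lambda>r. r \<in> {0<..<1}) (at_left (1::real))"
    by (rule eventually_at_left_real) simp
  note filterlim_power2_at_left_one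
  moreover have "eventually (\<lambda>t. (1 - t) * Hs_kernel_diag s t < \<epsilon> / L) (at_left 1)"
    using \<open>L > 0\<close> assms(3) by (intro order_tendstoD(2)[OF tendsto_Hs_kernel_diag[OF assms(2)]]) simp
  ultimately have "eventually (\<lambda>r. (1 - r\<^sup>2) * Hs_kernel_diag s (r\<^sup>2) < \<epsilon> / L) (at_left 1)"
    by (rule eventually_compose_filterlim[rotated])
  with unit_interval rate
  have "eventually (\<lambda>r. r \<in> {0<..<1} \<and> 1 - (norm (f (of_real r)))\<^sup>2 \<le> L * (1 - r)
      \<and> (1 - r\<^sup>2) * Hs_kernel_diag s (r\<^sup>2) < \<epsilon> / L) (at_left 1)"
    by (intro eventually_conj)
  then obtain r where r: "r \<in> {0<..<1}" and rate_r: "1 - (norm (f (of_real r)))\<^sup>2 \<le> L * (1 - r)"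
    and small: "(1 - r\<^sup>2) * Hs_kernel_diag s (r\<^sup>2) < \<epsilon> / L"
    using eventually_happens'[OF trivial_limit_at_left_real] by blast
  have "r\<^sup>2 < 1"
    using r by (simp add: abs_square_less_1)
  have "1 - r \<le> 1 - r\<^sup>2"
    using r by (simp add: power2_eq_square mult_left_le_one_le)
  have f_r: "0 < 1 - (norm (f (of_real r)))\<^sup>2"
    using analytic_disc_norm_less_one[OF assms(1), of "of_real r"] r by (simp add: abs_square_less_1)
  have "Hs_kernel_diag s (r\<^sup>2) * (1 - r\<^sup>2) \<le> \<epsilon> / L"
    using small by (simp add: mult.commute)
  then have "Hs_kernel_diag s (r\<^sup>2) \<le> \<epsilon> / L / (1 - r\<^sup>2)"
    using \<open>r\<^sup>2 < 1\<close> by (simp only: pos_le_divide_eq diff_gt_0_iff_gt)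
  also have "\<dots> \<le> \<epsilon> / L / (1 - r)"
    using r \<open>1 - r \<le> 1 - r\<^sup>2\<close> \<open>L > 0\<close> assms(3) by (intro divide_left_mono) auto
  also have "\<dots> \<le> \<epsilon> / (1 - (norm (f (of_real r)))\<^sup>2)"
    unfolding divide_divide_eq_left using rate_r f_r assms(3) by (intro divide_left_mono) auto
  finally show ?thesis
    using r by (intro bexI[of _ "of_real r"]) auto
qed

theorem theorem1p12:
  fixes V :: "(complex ^ 'd) set" and f :: "complex \<Rightarrow> complex ^ 'd" and s :: real
  assumes "analytic_disc_attached V f"
    and "s < 0"
  shows "Hs s \<noteq> Hf f"
proof
  assume "Hs s = Hf f"
  note f_ball = analytic_disc_norm_less_one[OF assms(1)]
  have "\<not> Hf f \<subseteq> Hs s"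
    unfolding Hf_def DA_kernel_def[symmetric]
  proof (rule rkhs_not_subset_of_smaller_growth
      [where D = "\<lambda>z. 1 / (1 - (norm (f z))\<^sup>2)" and E = "\<lambda>z. Hs_kernel_diag s ((cmod z)\<^sup>2)"])
    fix z w :: complex
    assume z: "z \<in> ball 0 1" and w: "w \<in> ball 0 1"
    show "DA_kernel (f z) (f z) = of_real (1 / (1 - (norm (f z))\<^sup>2))"
      by (rule DA_kernel_self)
    show "0 < 1 / (1 - (norm (f z))\<^sup>2)"
      using f_ball[OF z] by (simp add: abs_square_less_1)
    show "cmod (DA_kernel (f z) (f w)) \<le> sqrt (1 / (1 - (norm (f z))\<^sup>2)) * sqrt (1 / (1 - (norm (f w))\<^sup>2))"
      using f_ball[OF z] f_ball[OF w] by (rule norm_DA_kernel_le_diag)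
    show "0 \<le> Re (DA_kernel (f z) (f w))"
      using f_ball[OF z] f_ball[OF w] by (rule Re_DA_kernel_nonneg)
  next
    show "\<exists>M\<ge>0. \<forall>z\<in>ball 0 1. (cmod (h z))\<^sup>2 \<le> M * Hs_kernel_diag s ((cmod z)\<^sup>2)" if "h \<in> Hs s" for h
      using that assms(2) by (intro Hs_growth) auto
    show "\<exists>z\<in>ball 0 1. Hs_kernel_diag s ((cmod z)\<^sup>2) \<le> \<epsilon> * (1 / (1 - (norm (f z))\<^sup>2))" if "\<epsilon> > 0" for \<epsilon>
      using assms that by (rule Hs_kernel_diag_small_on_attached_disc)
  qed
  with \<open>Hs s = Hf f\<close> show False
    by simp
qed

end
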